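(* Let $m\ge2$ and $t\ge1$ be integers. There exists $a\in\{1,2,\dots,m\}$ with $f_2^t(a)=a$ if and only if $\gcd(m+1,2^t+1)>1$ or $\gcd(m+1,2^t-1)>1$. Moreover, every $a\in\{1,\dots,m\}$ with $f_2^t(a)=a$ can be written as $a=\frac{\xi(m+1)}{2^t+1}$ or $a=\frac{\xi(m+1)}{2^t-1}$ for some odd integer $\xi$ with $1\le\xi<2^t$.
   Context: For an integer $m\ge2$, $X=\{0,1,\dots,m^2-1\}$, each element written with exactly two base-$m$ digits (leading zeros allowed), and $f(x)=D(x)-A(x)$ is the two-digit base-$m$ Kaprekar map ($D(x)$, $A(x)$: digits of $x$ in nonincreasing, resp. nondecreasing, order). The map $f_2:\{0,1,\dots,m\}\to\{0,1,\dots,m\}$ is defined by $f(a(m-1))=f_2(a)(m-1)$; explicitly $f_2(0)=0$ and $f_2(a)=|2a-m-1|$ for $1\le a\le m$. $f_2^t$ denotes the $t$-fold iterate. *)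

theory Defs
  imports Main
begin

definition f2 :: "nat \<Rightarrow> nat \<Rightarrow> nat" where
  "f2 m a = (if a = 0 then 0 else nat \<bar>2 * int a - int m - 1\<bar>)"

end

theory Submission
  imports Defs
begin

(* Write n = m + 1, so that f2(a) = |2a - n| for a > 0.  Along an orbit avoiding 0 one has
   f2^k(a) = |2^k a - c n| with c odd and 0 < c < 2^k, so a fixed point satisfies
   a (2^t -+ 1) = c n; as 0 < a < n, this forces n to share a factor with 2^t -+ 1.
   Conversely, let d > 1 divide both n and 2^t +- 1, and put q = n / d.  The orbit of q consists
   of odd multiples q p of q with p < d, and the iterate formula gives p == +-2^t == +-1 (mod d)
   after t steps; since d - 1 is even, p = 1, i.e. q is fixed. *)

lemma f2_zero [simp]: "f2 m 0 = 0"
  by (simp add: f2_def)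

lemma f2_of_pos: "0 < a \<Longrightarrow> int (f2 m a) = \<bar>2 * int a - (int m + 1)\<bar>"
  by (simp add: f2_def)

lemma f2_le: "a \<le> m \<Longrightarrow> f2 m a \<le> m"
  by (auto simp: f2_def)

lemma funpow_f2_le: "a \<le> m \<Longrightarrow> (f2 m ^^ k) a \<le> m"
  by (induction k) (simp_all add: f2_le)

lemma abs_double_abs_sub:
  fixes y n :: int
  obtains e where "e = 1 \<or> e = -1" and "\<bar>2 * \<bar>y\<bar> - n\<bar> = \<bar>2 * y - e * n\<bar>"
proof (cases "y \<ge> 0")
  case True
  then show ?thesis by (intro that[of 1]) auto
next
  case False
  have "\<bar>2 * \<bar>y\<bar> - n\<bar> = \<bar>2 * y - (-1) * n\<bar>"
    using False by (simp add: abs_minus_commute)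
  then show ?thesis by (intro that[of "-1"]) simp_all
qed

lemma funpow_f2_eq:
  assumes "0 < k" and "(f2 m ^^ k) a \<noteq> 0"
  shows "\<exists>c::int. odd c \<and> 0 < c \<and> c < 2 ^ k \<and>
           int ((f2 m ^^ k) a) = \<bar>2 ^ k * int a - c * (int m + 1)\<bar>"
  using assms
proof (induction k rule: nat_induct_non_zero)
  case 1
  then have "0 < a" by (cases "a = 0") simp_all
  then have "int ((f2 m ^^ 1) a) = \<bar>2 ^ 1 * int a - 1 * (int m + 1)\<bar>"
    by (simp add: f2_of_pos)
  then show ?case by (intro exI[of _ 1]) simp
next
  case (Suc k)
  have "(f2 m ^^ k) a \<noteq> 0"
    using Suc.prems by (cases "(f2 m ^^ k) a = 0") simp_all
  then obtain c :: int where c: "odd c" "0 < c" "c < 2 ^ k"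
    and fk: "int ((f2 m ^^ k) a) = \<bar>2 ^ k * int a - c * (int m + 1)\<bar>"
    using Suc.IH by blast
  obtain e :: int where e: "e = 1 \<or> e = -1"
    and double: "\<bar>2 * \<bar>2 ^ k * int a - c * (int m + 1)\<bar> - (int m + 1)\<bar> =
                 \<bar>2 * (2 ^ k * int a - c * (int m + 1)) - e * (int m + 1)\<bar>"
    using abs_double_abs_sub .
  have "int ((f2 m ^^ Suc k) a) = \<bar>2 * int ((f2 m ^^ k) a) - (int m + 1)\<bar>"
    using \<open>(f2 m ^^ k) a \<noteq> 0\<close> by (simp add: f2_of_pos)
  also have "\<dots> = \<bar>2 * (2 ^ k * int a - c * (int m + 1)) - e * (int m + 1)\<bar>"
    by (simp only: fk double)
  also have "\<dots> = \<bar>2 ^ Suc k * int a - (2 * c + e) * (int m + 1)\<bar>"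
    by (simp add: algebra_simps)
  finally have "int ((f2 m ^^ Suc k) a) = \<bar>2 ^ Suc k * int a - (2 * c + e) * (int m + 1)\<bar>" .
  moreover have "odd (2 * c + e)" "0 < 2 * c + e" "2 * c + e < 2 ^ Suc k"
    using c e by auto
  ultimately show ?case by blast
qed

lemma funpow_f2_odd_multiple:
  assumes "int m + 1 = int q * int d" and "odd d" and "0 < q"
  shows "\<exists>p. odd p \<and> (f2 m ^^ k) q = q * p"
proof (induction k)
  case 0
  show ?case by (intro exI[of _ 1]) simp
next
  case (Suc k)
  then obtain p where p: "odd p" "(f2 m ^^ k) q = q * p" by blast
  have "0 < q * p" using p(1) \<open>0 < q\<close> by (simp add: odd_pos)
  then have "int ((f2 m ^^ Suc k) q) = \<bar>2 * (int q * int p) - int q * int d\<bar>"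
    using p(2) assms(1) by (simp add: f2_of_pos)
  also have "\<dots> = \<bar>int q * (2 * int p - int d)\<bar>"
    by (simp add: algebra_simps)
  also have "\<dots> = int q * \<bar>2 * int p - int d\<bar>"
    by (simp add: abs_mult)
  also have "\<dots> = int (q * nat \<bar>2 * int p - int d\<bar>)"
    by simp
  finally have "(f2 m ^^ Suc k) q = q * nat \<bar>2 * int p - int d\<bar>"
    by (simp only: of_nat_eq_iff)
  moreover have "odd (nat \<bar>2 * int p - int d\<bar>)"
    using \<open>odd d\<close> by (simp add: even_nat_iff)
  ultimately show ?case by blast
qed

lemma fixed_point_coefficient:
  assumes "0 < t" and "0 < a" and "(f2 m ^^ t) a = a"
  shows "\<exists>\<xi>::nat. odd \<xi> \<and> 1 \<le> \<xi> \<and> \<xi> < 2 ^ t \<and>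
           (a * (2 ^ t + 1) = \<xi> * (m + 1) \<or> a * (2 ^ t - 1) = \<xi> * (m + 1))"
proof -
  obtain c :: int where c: "odd c" "0 < c" "c < 2 ^ t"
    and fixed: "int a = \<bar>2 ^ t * int a - c * (int m + 1)\<bar>"
    using funpow_f2_eq[of t m a] assms by auto
  have "int a * (2 ^ t - 1) = c * (int m + 1) \<or> int a * (2 ^ t + 1) = c * (int m + 1)"
    using fixed by (cases "2 ^ t * int a - c * (int m + 1) \<ge> 0") (auto simp: algebra_simps)
  then have "int (a * (2 ^ t - 1)) = int (nat c * (m + 1)) \<or>
             int (a * (2 ^ t + 1)) = int (nat c * (m + 1))"
    using \<open>0 < c\<close> by (auto simp: algebra_simps)
  then have "a * (2 ^ t + 1) = nat c * (m + 1) \<or> a * (2 ^ t - 1) = nat c * (m + 1)"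
    by (auto simp only: of_nat_eq_iff)
  moreover have "odd (nat c)" "1 \<le> nat c" "nat c < 2 ^ t"
    using c by (auto simp: even_nat_iff nat_less_iff)
  ultimately show ?thesis by blast
qed

lemma gcd_gt_1_if_dvd_mult:
  fixes a n x :: nat
  assumes "0 < a" and "a < n" and "n dvd a * x"
  shows "1 < gcd n x"
proof (rule ccontr)
  assume "\<not> 1 < gcd n x"
  moreover have "gcd n x \<noteq> 0" using \<open>a < n\<close> by simp
  ultimately have "coprime n x" unfolding coprime_iff_gcd_eq_1 by linarith
  then have "n dvd a" using assms(3) coprime_dvd_mult_left_iff by blast
  then show False using assms(1,2) by (auto dest: dvd_imp_le)
qed

lemma odd_eq_1_if_dvd_diff_unit:
  fixes p d s :: int
  assumes "odd p" "0 < p" "p < d" "odd d" "s = 1 \<or> s = -1" "d dvd p - s"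
  shows "p = 1"
  using \<open>s = 1 \<or> s = -1\<close>
proof
  assume "s = 1"
  then show "p = 1" using assms zdvd_not_zless[of "p - 1" d] by force
next
  assume "s = -1"
  then have "p + 1 = d" using assms zdvd_not_zless[of "p + 1" d] by force
  then show "p = 1" using assms by auto
qed

lemma funpow_f2_cofactor:
  assumes n: "int m + 1 = int q * int d" and "odd d" and "0 < q" and "q \<le> m" and "0 < t"
  obtains p s where "odd p" and "p < d" and "s = 1 \<or> s = -1"
    and "int d dvd int p - s * 2 ^ t" and "(f2 m ^^ t) q = q * p"
proof -
  obtain p where "odd p" and p: "(f2 m ^^ t) q = q * p"
    using funpow_f2_odd_multiple[OF n \<open>odd d\<close> \<open>0 < q\<close>] by blast
  then have "(f2 m ^^ t) q \<noteq> 0" using \<open>0 < q\<close> by (auto elim: oddE)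
  then obtain c :: int
    where "int ((f2 m ^^ t) q) = \<bar>2 ^ t * int q - c * (int m + 1)\<bar>"
    using funpow_f2_eq \<open>0 < t\<close> by blast
  also have "\<dots> = \<bar>int q * (2 ^ t - c * int d)\<bar>"
    unfolding n by (simp add: algebra_simps)
  also have "\<dots> = int q * \<bar>2 ^ t - c * int d\<bar>"
    by (simp add: abs_mult)
  finally have "int p = \<bar>2 ^ t - c * int d\<bar>" using p \<open>0 < q\<close> by simp
  then obtain s :: int where s: "s = 1 \<or> s = -1" and "int p = s * (2 ^ t - c * int d)"
    by (cases "2 ^ t - c * int d \<ge> 0") (auto intro: that[of 1] that[of "-1"])
  then have "int p - s * 2 ^ t = - (s * c) * int d" by (simp add: algebra_simps)
  then have "int d dvd int p - s * 2 ^ t" by simp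
  moreover have "p < d"
  proof -
    have "q * p \<le> m" using funpow_f2_le[OF \<open>q \<le> m\<close>, of t] p by simp
    then have "int (q * p) \<le> int m" by (simp only: of_nat_le_iff)
    then have "int q * int p < int q * int d" using n by simp
    then show ?thesis using \<open>0 < q\<close> by simp
  qed
  ultimately show ?thesis using that \<open>odd p\<close> s p by blast
qed

lemma fixed_point_if_divisor:
  assumes "0 < t" and "d dvd m + 1" and "1 < d" and "d dvd 2 ^ t + 1 \<or> d dvd 2 ^ t - 1"
  shows "\<exists>a\<in>{1..m}. (f2 m ^^ t) a = a"
proof -
  obtain q where q: "m + 1 = d * q" using \<open>d dvd m + 1\<close> by blast
  then have "0 < q" by (cases q) auto
  have "q < d * q" using \<open>1 < d\<close> \<open>0 < q\<close> by simp
  then have "q \<le> m" using q by linarith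
  have "int (m + 1) = int (q * d)" using q by (simp only: mult.commute)
  then have n: "int m + 1 = int q * int d" by simp
  have "int d dvd int (2 ^ t + 1) \<or> int d dvd int (2 ^ t - 1)"
    using assms(4) by (simp only: of_nat_dvd_iff)
  then have "int d dvd 2 ^ t - (-1) \<or> int d dvd 2 ^ t - 1"
    by (simp add: of_nat_diff add.commute)
  then obtain r :: int where r: "r = 1 \<or> r = -1" and dr: "int d dvd 2 ^ t - r"
    by blast
  have "odd ((2::int) ^ t - r)" using r \<open>0 < t\<close> by auto
  then have "odd (int d)" using dr by (meson dvd_trans)
  then have "odd d" by simp
  obtain p s where "odd p" "p < d" and s: "s = 1 \<or> s = -1"
    and ds: "int d dvd int p - s * 2 ^ t" and p: "(f2 m ^^ t) q = q * p"
    using funpow_f2_cofactor[OF n \<open>odd d\<close> \<open>0 < q\<close> \<open>q \<le> m\<close> \<open>0 < t\<close>] .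
  have "int d dvd (int p - s * 2 ^ t) + s * (2 ^ t - r)" using ds dr by simp
  then have "int d dvd int p - s * r" by (simp add: algebra_simps)
  moreover have "s * r = 1 \<or> s * r = -1" using s r by auto
  ultimately have "int p = 1"
    using odd_eq_1_if_dvd_diff_unit[of "int p" "int d"] \<open>odd p\<close> \<open>p < d\<close> \<open>odd d\<close>
    by (auto elim: oddE)
  then show ?thesis using p \<open>0 < q\<close> \<open>q \<le> m\<close> by auto
qed

theorem theorem3p3p1:
  fixes m t :: nat
  assumes "m \<ge> 2" and "t \<ge> 1"
  shows "((\<exists>a\<in>{1..m}. (f2 m ^^ t) a = a) \<longleftrightarrow>
            (gcd (m + 1) (2 ^ t + 1) > 1 \<or> gcd (m + 1) (2 ^ t - 1) > 1))
       \<and> (\<forall>a\<in>{1..m}. (f2 m ^^ t) a = a \<longrightarrow>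
            (\<exists>\<xi>::nat. odd \<xi> \<and> 1 \<le> \<xi> \<and> \<xi> < 2 ^ t \<and>
               (a * (2 ^ t + 1) = \<xi> * (m + 1) \<or> a * (2 ^ t - 1) = \<xi> * (m + 1))))"
proof -
  have "0 < t" using \<open>t \<ge> 1\<close> by simp
  have shape: "\<forall>a\<in>{1..m}. (f2 m ^^ t) a = a \<longrightarrow>
            (\<exists>\<xi>::nat. odd \<xi> \<and> 1 \<le> \<xi> \<and> \<xi> < 2 ^ t \<and>
               (a * (2 ^ t + 1) = \<xi> * (m + 1) \<or> a * (2 ^ t - 1) = \<xi> * (m + 1)))"
    using fixed_point_coefficient[OF \<open>0 < t\<close>] by simp
  moreover have "(\<exists>a\<in>{1..m}. (f2 m ^^ t) a = a) \<longleftrightarrow>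
            (gcd (m + 1) (2 ^ t + 1) > 1 \<or> gcd (m + 1) (2 ^ t - 1) > 1)"
  proof
    assume "\<exists>a\<in>{1..m}. (f2 m ^^ t) a = a"
    then obtain a where "a \<in> {1..m}" and "(f2 m ^^ t) a = a" by blast
    then obtain \<xi> where "a * (2 ^ t + 1) = \<xi> * (m + 1) \<or> a * (2 ^ t - 1) = \<xi> * (m + 1)"
      using shape by blast
    then have "m + 1 dvd a * (2 ^ t + 1) \<or> m + 1 dvd a * (2 ^ t - 1)"
      by (metis dvd_triv_right)
    moreover have a: "0 < a" "a < m + 1" using \<open>a \<in> {1..m}\<close> by auto
    ultimately show "gcd (m + 1) (2 ^ t + 1) > 1 \<or> gcd (m + 1) (2 ^ t - 1) > 1"
      using gcd_gt_1_if_dvd_mult[OF a] by blast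
  next
    assume "gcd (m + 1) (2 ^ t + 1) > 1 \<or> gcd (m + 1) (2 ^ t - 1) > 1"
    then show "\<exists>a\<in>{1..m}. (f2 m ^^ t) a = a"
      using fixed_point_if_divisor[OF \<open>0 < t\<close> gcd_dvd1] gcd_dvd2 by blast
  qed
  ultimately show ?thesis by blast
qed

end
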